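(* Let $M>0$, $\beta^*>0$, and let $g$ be the log-normal density $g(t)=\frac{1}{t\sigma\sqrt{2\pi}}\exp\!\big(-\frac{(\ln t-\mu)^2}{2\sigma^2}\big)$ for $t>0$, $g(t)=0$ for $t\le0$ ($\mu\in\mathbb{R}$, $\sigma>0$). Let $I$ be the unique $C^1$ solution on $[0,\infty)$ of \[ I'(t)=\beta^*(M-I(t))\Big(I(t)-\int_0^t g(t-s)I(s)\,ds\Big),\qquad I(0)=I_0\in[0,M], \] and set $I_a(t)=I(t)-\int_0^t g(t-s)I(s)\,ds$. If $0<I_0\le M$, then $I_a(t)>0$ for all $t\ge0$; if $I_0=0$, then $I_a\equiv0$.
   Context: $I_a$ represents the number of actively infected individuals. *)

theory Defs
  imports "HOL-Analysis.Analysis"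
begin

definition lognormal_density :: "real \<Rightarrow> real \<Rightarrow> real \<Rightarrow> real" where
  "lognormal_density mu sig t =
     (if t > 0 then 1 / (t * sig * sqrt (2 * pi)) * exp (- ((ln t - mu)^2) / (2 * sig^2))
      else 0)"

definition active_infected :: "(real \<Rightarrow> real) \<Rightarrow> (real \<Rightarrow> real) \<Rightarrow> real \<Rightarrow> real" where
  "active_infected g I t = I t - integral {0..t} (\<lambda>s. g (t - s) * I s)"

end

theory Submission
  imports Defs "HOL-Real_Asymp.Real_Asymp" "HOL-Probability.Distributions"
begin

text \<open>
  The log-normal kernel g has total mass 1 and puts positive mass beyond every t, so
  int_0^t g < 1.  Hence, as long as I is nondecreasing on [0,t] and I(0) > 0, the memory
  term is at most I(t) int_0^t g < I(t), i.e. I_a(t) > 0.  Conversely I_a > 0 and I \<le> M give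
  I' \<ge> 0.  To close this loop, look at the first time I' could become negative: there
  I_a > 0, so either I < M and I' > 0 nearby, or I = M and I' vanishes from then on.
  The level M is never crossed because M - I satisfies a linear equation and so, by a
  Gronwall argument, vanishes identically once it hits 0; the same argument shows that
  I(0) = 0 forces I = 0 for all times.
\<close>

lemma lognormal_density_nonneg: "0 < sig \<Longrightarrow> 0 \<le> lognormal_density mu sig t"
  unfolding lognormal_density_def by auto

lemma lognormal_density_eq_normal_density:
  assumes "0 < sig" "0 < t"
  shows "lognormal_density mu sig t = normal_density mu sig (ln t) / t"
proof -
  have "sqrt (2 * pi * sig\<^sup>2) = sig * sqrt (2 * pi)"
    using assms by (simp add: real_sqrt_mult)
  then show ?thesis
    using assms unfolding lognormal_density_def normal_density_def by (simp add: field_simps)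
qed

lemma continuous_on_lognormal_density:
  assumes "0 < sig"
  shows "continuous_on UNIV (lognormal_density mu sig)"
proof -
  let ?g = "lognormal_density mu sig"
  define F where "F t = exp (- ((ln t - mu)^2) / (2 * sig^2)) / (t * sig * sqrt (2 * pi))" for t
  have g_eq: "?g t = (if 0 < t then F t else 0)" for t
    unfolding lognormal_density_def F_def by simp
  have "isCont ?g x" for x
  proof (cases x "0::real" rule: linorder_cases)
    case less
    then have "\<forall>\<^sub>F y in nhds x. 0 = ?g y"
      using eventually_nhds_in_open[of "{..<0}" x] by (auto elim!: eventually_mono simp: g_eq)
    then show ?thesis
      using isCont_cong by force
  next
    case greater
    then have "\<forall>\<^sub>F y in nhds x. F y = ?g y"
      using eventually_nhds_in_open[of "{0<..}" x] by (auto elim!: eventually_mono simp: g_eq)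
    moreover have "isCont F x"
      unfolding F_def using greater assms by (intro continuous_intros) auto
    ultimately show ?thesis
      using isCont_cong by blast
  next
    case equal
    have "(F \<longlongrightarrow> 0) (at_right 0)"
      unfolding F_def using assms by real_asymp
    then have "(?g \<longlongrightarrow> 0) (at_right 0)"
      by (rule Lim_transform_eventually) (auto simp: g_eq intro: eventually_mono[OF eventually_at_right_less])
    moreover have "(?g \<longlongrightarrow> 0) (at_left 0)"
      by (rule tendsto_eventually) (simp add: g_eq eventually_at_left_field exI[of _ "-1"])
    ultimately show ?thesis
      using equal by (simp add: isCont_def g_eq filterlim_split_at)
  qed
  then show ?thesis
    by (simp add: continuous_on_eq_continuous_at)
qed

lemma continuous_on_normal_density: "continuous_on A (normal_density mu sig)"
  by (cases "sig = 0") (auto simp: normal_density_def intro!: continuous_intros)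

lemma integral_normal_density_le_1:
  assumes "0 < sig"
  shows "integral {a..b} (normal_density mu sig) \<le> 1"
proof -
  have "(normal_density mu sig has_integral 1) UNIV"
    using has_integral_integral_lborel[of "normal_density mu sig"] assms by simp
  moreover have "normal_density mu sig integrable_on {a..b}"
    by (intro integrable_continuous_interval continuous_on_normal_density)
  ultimately show ?thesis
    by (metis integral_subset_le integral_unique integrable_on_def normal_density_nonneg subset_UNIV)
qed

lemma integral_normal_density_pos:
  assumes "0 < sig" "a < b"
  shows "0 < integral {a..b} (normal_density mu sig)"
proof -
  note cont = continuous_on_normal_density[of "{a..b}" mu sig]
  obtain x where "x \<in> {a..b}"
    and min: "\<And>y. y \<in> {a..b} \<Longrightarrow> normal_density mu sig x \<le> normal_density mu sig y"
    using continuous_attains_inf[OF compact_Icc _ cont] assms by auto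
  have "(b - a) * normal_density mu sig x = integral {a..b} (\<lambda>_. normal_density mu sig x)"
    using assms by simp
  also have "\<dots> \<le> integral {a..b} (normal_density mu sig)"
    using min cont by (intro integral_le integrable_continuous_interval) auto
  finally show ?thesis
    using normal_density_pos[OF assms(1)] assms(2)
    by (smt (verit) mult_pos_pos)
qed

lemma integral_lognormal_density_eq:
  assumes "0 < sig" "0 < a" "a \<le> b"
  shows "integral {a..b} (lognormal_density mu sig) = integral {ln a..ln b} (normal_density mu sig)"
proof -
  have "((\<lambda>x. (1 / x) *\<^sub>R normal_density mu sig (ln x)) has_integral
          integral {ln a..ln b} (normal_density mu sig)) {a..b}"
  proof (rule has_integral_substitution[OF assms(3)])
    show "continuous_on {ln a..ln b} (normal_density mu sig)"
      by (rule continuous_on_normal_density)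
    show "(ln has_real_derivative 1 / x) (at x within {a..b})" if "x \<in> {a..b}" for x
      using that assms by (auto intro!: derivative_eq_intros)
  qed (use assms in auto)
  then have "(lognormal_density mu sig has_integral integral {ln a..ln b} (normal_density mu sig)) {a..b}"
    by (rule has_integral_eq[rotated]) (use assms in \<open>simp add: lognormal_density_eq_normal_density\<close>)
  then show ?thesis
    by (rule integral_unique)
qed

lemma integral_lognormal_density_less_1:
  assumes "0 < sig"
  shows "integral {0..t} (lognormal_density mu sig) < 1"
proof (cases "0 < t")
  case False
  then show ?thesis
    by (cases "t = 0") auto
next
  case True
  let ?g = "lognormal_density mu sig"
  define c where "c = integral {ln t..ln t + 1} (normal_density mu sig)"
  have "0 < c"
    unfolding c_def using assms by (intro integral_normal_density_pos) auto
  have tail: "integral {e..t} ?g \<le> 1 - c" if "0 < e" "e \<le> t" for e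
  proof -
    have "integral {e..t} ?g + c = integral {ln e..ln t + 1} (normal_density mu sig)"
      unfolding c_def integral_lognormal_density_eq[OF assms that]
      using that by (intro Henstock_Kurzweil_Integration.integral_combine
          integrable_continuous_interval continuous_on_normal_density) auto
    also have "\<dots> \<le> 1"
      by (rule integral_normal_density_le_1[OF assms])
    finally show ?thesis
      by simp
  qed
  have "?g integrable_on {0..t}"
    using continuous_on_lognormal_density[OF assms]
    by (intro integrable_continuous_interval) (rule continuous_on_subset, auto)
  then have "continuous_on {0..t} (\<lambda>e. integral {e..t} ?g)"
    by (rule indefinite_integral_continuous_1')
  then have "((\<lambda>e. integral {e..t} ?g) \<longlongrightarrow> integral {0..t} ?g) (at 0 within {0..t})"
    using True by (simp add: continuous_on_def)
  then have "((\<lambda>e. integral {e..t} ?g) \<longlongrightarrow> integral {0..t} ?g) (at_right 0)"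
    by (simp add: at_within_Icc_at_right[OF True])
  moreover have "\<forall>\<^sub>F e in at_right 0. integral {e..t} ?g \<le> 1 - c"
    unfolding eventually_at_right_field using True tail by (auto intro!: exI[of _ t])
  ultimately have "integral {0..t} ?g \<le> 1 - c"
    by (rule tendsto_upperbound) simp
  then show ?thesis
    using \<open>0 < c\<close> by simp
qed

lemma integral_reflect_Icc:
  fixes f :: "real \<Rightarrow> 'a::banach"
  shows "integral {0..t} (\<lambda>s. f (t - s)) = integral {0..t} f"
proof -
  have "(\<lambda>s. f (t - s)) = (\<lambda>x. f (- x)) \<circ> (+) (- t)"
    by (simp add: comp_def)
  then have "integral {0..t} (\<lambda>s. f (t - s)) = integral {- t..- 0} (\<lambda>x. f (- x))"
    by (simp add: integral_shift_Icc_real)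
  then show ?thesis
    using Henstock_Kurzweil_Integration.integral_reflect_real[of t 0 f] by simp
qed

lemma convolution_integrable:
  fixes g I :: "real \<Rightarrow> real"
  assumes "continuous_on {0..t} g" "continuous_on {0..t} I"
  shows "(\<lambda>s. g (t - s) * I s) integrable_on {0..t}"
  by (intro integrable_continuous_interval continuous_intros assms
      continuous_on_compose2[OF assms(1)]) auto

lemma abs_convolution_le:
  fixes g I :: "real \<Rightarrow> real"
  assumes "0 \<le> t" "continuous_on {0..t} g" "continuous_on {0..t} I"
    and g_le: "\<And>u. u \<in> {0..t} \<Longrightarrow> \<bar>g u\<bar> \<le> C"
    and I_le: "\<And>s. s \<in> {0..t} \<Longrightarrow> \<bar>I s\<bar> \<le> K"
  shows "\<bar>integral {0..t} (\<lambda>s. g (t - s) * I s)\<bar> \<le> C * K * t"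
proof -
  have "norm (integral {0..t} (\<lambda>s. g (t - s) * I s)) \<le> integral {0..t} (\<lambda>_. C * K)"
  proof (rule integral_norm_bound_integral)
    fix s assume s: "s \<in> {0..t}"
    then have "\<bar>g (t - s)\<bar> \<le> C" "\<bar>I s\<bar> \<le> K"
      by (auto intro!: g_le I_le)
    then show "norm (g (t - s) * I s) \<le> C * K"
      by (simp add: abs_mult mult_mono')
  qed (use assms convolution_integrable in auto)
  then show ?thesis
    using assms(1) by (simp add: algebra_simps)
qed

lemma convolution_less_if_mono:
  fixes g I :: "real \<Rightarrow> real"
  assumes "0 \<le> t" "continuous_on {0..t} g" "\<And>u. u \<in> {0..t} \<Longrightarrow> 0 \<le> g u"
    and "integral {0..t} g < 1"
    and "continuous_on {0..t} I" "mono_on {0..t} I" "0 < I 0"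
  shows "integral {0..t} (\<lambda>s. g (t - s) * I s) < I t"
proof -
  have "0 < I t"
    using assms mono_onD[of "{0..t}" I 0 t] by auto
  have "integral {0..t} (\<lambda>s. g (t - s) * I s) \<le> integral {0..t} (\<lambda>s. g (t - s) * I t)"
    using assms mono_onD[of "{0..t}" I _ t]
    by (intro integral_le convolution_integrable mult_left_mono) auto
  also have "\<dots> = integral {0..t} g * I t"
    by (simp add: integral_reflect_Icc)
  also have "\<dots> < I t"
    using \<open>0 < I t\<close> assms(4) by simp
  finally show ?thesis .
qed

lemma gronwall_vanishing_step:
  fixes f f' :: "real \<Rightarrow> real"
  assumes "0 \<le> L" "L * d \<le> 1 / 2"
    and deriv: "\<And>t. t \<in> {a..b} \<Longrightarrow> (f has_real_derivative f' t) (at t within {a..b})"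
    and bound: "\<And>t B. t \<in> {a..b} \<Longrightarrow> \<forall>s\<in>{a..t}. \<bar>f s\<bar> \<le> B \<Longrightarrow> \<bar>f' t\<bar> \<le> L * B"
    and "a \<le> c" and zero: "\<forall>t\<in>{a..c}. f t = 0"
  shows "\<forall>t\<in>{a..min b (c + d)}. f t = 0"
proof (cases "min b (c + d) \<le> c")
  case True
  then show ?thesis
    using zero by auto
next
  case False
  define e where "e = min b (c + d)"
  have "c < e" "e \<le> b" "e \<le> c + d"
    using False by (auto simp: e_def)
  have "continuous_on {a..b} f"
    using deriv by (meson DERIV_continuous continuous_on_eq_continuous_within)
  then have "continuous_on {a..e} (\<lambda>t. \<bar>f t\<bar>)"
    using \<open>e \<le> b\<close> by (intro continuous_intros) (auto elim!: continuous_on_subset)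
  moreover have "{a..e} \<noteq> {}"
    using \<open>a \<le> c\<close> \<open>c < e\<close> by simp
  ultimately obtain t1 where "t1 \<in> {a..e}" and max: "\<And>t. t \<in> {a..e} \<Longrightarrow> \<bar>f t\<bar> \<le> \<bar>f t1\<bar>"
    using continuous_attains_sup[OF compact_Icc] by blast
  have "0 \<le> L * \<bar>f t1\<bar> * d"
    using \<open>0 \<le> L\<close> \<open>c < e\<close> \<open>e \<le> c + d\<close> by simp
  have contract: "\<bar>f t\<bar> \<le> L * \<bar>f t1\<bar> * d" if "t \<in> {a..e}" for t
  proof (cases "t \<le> c")
    case True
    then show ?thesis
      using that zero \<open>0 \<le> L * \<bar>f t1\<bar> * d\<close> by simp
  next
    case False
    have "\<bar>f t - f c\<bar> \<le> L * \<bar>f t1\<bar> * \<bar>t - c\<bar>"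
    proof (rule field_differentiable_bound[where S = "{c..t}", unfolded real_norm_def])
      fix z assume z: "z \<in> {c..t}"
      then have "z \<in> {a..b}" "{c..t} \<subseteq> {a..b}" "{a..z} \<subseteq> {a..e}"
        using that \<open>a \<le> c\<close> \<open>e \<le> b\<close> by auto
      then show "(f has_real_derivative f' z) (at z within {c..t})"
        using deriv DERIV_subset by blast
      show "\<bar>f' z\<bar> \<le> L * \<bar>f t1\<bar>"
        using bound[of z "\<bar>f t1\<bar>"] max \<open>z \<in> {a..b}\<close> \<open>{a..z} \<subseteq> {a..e}\<close> by blast
    qed (use False in auto)
    also have "\<dots> \<le> L * \<bar>f t1\<bar> * d"
      using False that \<open>0 \<le> L\<close> \<open>e \<le> c + d\<close> by (intro mult_left_mono) auto
    finally show ?thesis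
      using zero \<open>a \<le> c\<close> by simp
  qed
  have "\<bar>f t1\<bar> \<le> L * d * \<bar>f t1\<bar>"
    using contract[OF \<open>t1 \<in> {a..e}\<close>] by (simp add: algebra_simps)
  also have "\<dots> \<le> \<bar>f t1\<bar> / 2"
    using mult_right_mono[OF \<open>L * d \<le> 1 / 2\<close> abs_ge_zero[of "f t1"]] by simp
  finally have "f t1 = 0"
    by simp
  then show ?thesis
    using max unfolding e_def by (intro ballI) (metis abs_le_zero_iff abs_zero)
qed

lemma gronwall_vanishing:
  fixes f f' :: "real \<Rightarrow> real"
  assumes "0 \<le> L"
    and deriv: "\<And>t. t \<in> {a..b} \<Longrightarrow> (f has_real_derivative f' t) (at t within {a..b})"
    and bound: "\<And>t B. t \<in> {a..b} \<Longrightarrow> \<forall>s\<in>{a..t}. \<bar>f s\<bar> \<le> B \<Longrightarrow> \<bar>f' t\<bar> \<le> L * B"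
    and "f a = 0" and "t \<in> {a..b}"
  shows "f t = 0"
proof -
  define d where "d = 1 / (2 * (L + 1))"
  have "0 < d" "L * d \<le> 1 / 2"
    using \<open>0 \<le> L\<close> by (auto simp: d_def field_simps)
  have zero: "\<forall>s\<in>{a..min b (a + real n * d)}. f s = 0" for n
  proof (induction n)
    case 0
    then show ?case
      using \<open>f a = 0\<close> by auto
  next
    case (Suc n)
    have "\<forall>s\<in>{a..min b (min b (a + real n * d) + d)}. f s = 0"
      using \<open>t \<in> {a..b}\<close> \<open>0 < d\<close>
      by (intro gronwall_vanishing_step[OF \<open>0 \<le> L\<close> \<open>L * d \<le> 1 / 2\<close> deriv bound _ Suc.IH]) auto
    moreover have "min b (min b (a + real n * d) + d) = min b (a + real (Suc n) * d)"
      using \<open>0 < d\<close> by (simp add: min_def distrib_right)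
    ultimately show ?case
      by simp
  qed
  obtain n where "(t - a) / d \<le> real n"
    using real_arch_simple by blast
  then have "t \<in> {a..min b (a + real n * d)}"
    using \<open>0 < d\<close> \<open>t \<in> {a..b}\<close> by (simp add: field_simps)
  then show ?thesis
    using zero by blast
qed

lemma nonneg_by_continuous_induction:
  fixes D :: "real \<Rightarrow> real"
  assumes cont: "continuous_on {a..} D"
    and step: "\<And>s. a \<le> s \<Longrightarrow> \<forall>u\<in>{a..<s}. 0 \<le> D u \<Longrightarrow> 0 < D s \<or> (\<forall>u\<ge>s. D u = 0)"
    and "a \<le> t"
  shows "0 \<le> D t"
proof (rule ccontr)
  assume "\<not> 0 \<le> D t"
  define Z where "Z = {s \<in> {a..t}. D s < 0}"
  define s where "s = Inf Z"
  have "t \<in> Z" "bdd_below Z"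
    using \<open>a \<le> t\<close> \<open>\<not> 0 \<le> D t\<close> by (auto simp: Z_def bdd_below_def)
  then have s_le: "\<And>z. z \<in> Z \<Longrightarrow> s \<le> z"
    unfolding s_def by (simp add: cInf_lower)
  have "a \<le> s"
    unfolding s_def using \<open>t \<in> Z\<close> by (intro cInf_greatest) (auto simp: Z_def)
  moreover have "\<forall>u\<in>{a..<s}. 0 \<le> D u"
    using s_le[of _] s_le[OF \<open>t \<in> Z\<close>] by (force simp: Z_def)
  ultimately consider "0 < D s" | "\<forall>u\<ge>s. D u = 0"
    using step by blast
  then show False
  proof cases
    case 1
    then obtain d where "0 < d" and d: "\<And>u. u \<in> {a..} \<Longrightarrow> dist u s < d \<Longrightarrow> dist (D u) (D s) < D s"
      using cont \<open>a \<le> s\<close> unfolding continuous_on_iff by force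
    have "s + d \<le> z" if "z \<in> Z" for z
      using that s_le[OF that] d[of z] by (force simp: Z_def dist_real_def)
    then have "s + d \<le> s"
      unfolding s_def using \<open>t \<in> Z\<close> by (intro cInf_greatest) auto
    then show False
      using \<open>0 < d\<close> by simp
  next
    case 2
    then show False
      using \<open>\<not> 0 \<le> D t\<close> s_le[OF \<open>t \<in> Z\<close>] by auto
  qed
qed

lemma continuous_on_Icc_abs_bound:
  fixes f :: "real \<Rightarrow> real"
  assumes "continuous_on {a..b} f"
  obtains K where "\<And>s. s \<in> {a..b} \<Longrightarrow> \<bar>f s\<bar> \<le> K"
proof -
  have "bounded (f ` {a..b})"
    by (intro compact_imp_bounded compact_continuous_image assms compact_Icc)
  then obtain K where "\<forall>x\<in>{a..b}. \<bar>f x\<bar> \<le> K"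
    by (auto simp: bounded_real)
  then show thesis
    using that by blast
qed


locale infection_ode =
  fixes g I :: "real \<Rightarrow> real" and M beta :: real
  assumes continuous_kernel: "continuous_on {0..} g"
    and kernel_nonneg: "\<And>u. 0 \<le> u \<Longrightarrow> 0 \<le> g u"
    and beta_pos: "0 < beta"
    and ode: "\<And>t. 0 \<le> t \<Longrightarrow>
      (I has_real_derivative beta * (M - I t) * active_infected g I t) (at t within {0..})"
begin

abbreviation Ia :: "real \<Rightarrow> real" where
  "Ia \<equiv> active_infected g I"

abbreviation dI :: "real \<Rightarrow> real" where
  "dI t \<equiv> beta * (M - I t) * Ia t"

lemma abs_dI: "\<bar>dI t\<bar> = beta * \<bar>M - I t\<bar> * \<bar>Ia t\<bar>"
  using beta_pos by (simp add: abs_mult)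

lemma continuous_on_I: "continuous_on {0..} I"
  using ode by (meson DERIV_continuous atLeast_iff continuous_on_eq_continuous_within)

lemma continuous_on_Icc_I: "continuous_on {a..b} I" if "0 \<le> a"
  using continuous_on_I by (rule continuous_on_subset) (use that in auto)

lemma continuous_on_Icc_kernel: "continuous_on {a..b} g" if "0 \<le> a"
  using continuous_kernel by (rule continuous_on_subset) (use that in auto)

lemma abs_active_infected_le:
  assumes "0 \<le> t" "t \<le> T"
    and C: "\<And>u. u \<in> {0..T} \<Longrightarrow> \<bar>g u\<bar> \<le> C"
    and B: "\<And>s. s \<in> {0..t} \<Longrightarrow> \<bar>I s\<bar> \<le> B"
  shows "\<bar>Ia t\<bar> \<le> (1 + C * T) * B"
proof -
  have "0 \<le> B" "0 \<le> C"
    using order_trans[OF abs_ge_zero B[of 0]] order_trans[OF abs_ge_zero C[of 0]] assms by auto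
  have "\<bar>integral {0..t} (\<lambda>s. g (t - s) * I s)\<bar> \<le> C * B * t"
    using assms by (intro abs_convolution_le continuous_on_Icc_I continuous_on_Icc_kernel) auto
  also have "\<dots> \<le> C * B * T"
    using assms \<open>0 \<le> B\<close> \<open>0 \<le> C\<close> by (intro mult_left_mono) auto
  finally have "\<bar>integral {0..t} (\<lambda>s. g (t - s) * I s)\<bar> \<le> C * B * T" .
  moreover have "\<bar>I t\<bar> \<le> B"
    using B assms(1) by simp
  ultimately have "\<bar>I t - integral {0..t} (\<lambda>s. g (t - s) * I s)\<bar> \<le> B + C * B * T"
    using abs_triangle_ineq4[of "I t" "integral {0..t} (\<lambda>s. g (t - s) * I s)"] by linarith
  then show ?thesis
    unfolding active_infected_def by (simp add: algebra_simps)
qed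

lemma active_infected_bounded:
  obtains B where "\<And>t. t \<in> {0..T} \<Longrightarrow> \<bar>Ia t\<bar> \<le> B"
proof -
  obtain K where K: "\<And>s. s \<in> {0..T} \<Longrightarrow> \<bar>I s\<bar> \<le> K"
    using continuous_on_Icc_abs_bound[OF continuous_on_Icc_I] by blast
  obtain C where C: "\<And>u. u \<in> {0..T} \<Longrightarrow> \<bar>g u\<bar> \<le> C"
    using continuous_on_Icc_abs_bound[OF continuous_on_Icc_kernel] by blast
  have "\<bar>Ia t\<bar> \<le> (1 + C * T) * K" if "t \<in> {0..T}" for t
    using that C K by (intro abs_active_infected_le) auto
  then show thesis
    by (rule that)
qed

lemma I_eq_M_after:
  assumes "0 \<le> t0" "t0 \<le> t" "I t0 = M"
  shows "I t = M"
proof -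
  obtain B where B: "\<And>s. s \<in> {0..t} \<Longrightarrow> \<bar>Ia s\<bar> \<le> B"
    using active_infected_bounded by blast
  have "0 \<le> B"
    using B[of 0] assms by force
  have "M - I t = 0"
  proof (rule gronwall_vanishing[where f = "\<lambda>s. M - I s" and f' = "\<lambda>s. - dI s"
        and L = "beta * B" and a = t0 and b = t])
    show "0 \<le> beta * B"
      using beta_pos \<open>0 \<le> B\<close> by simp
    show "((\<lambda>s. M - I s) has_real_derivative - dI s) (at s within {t0..t})" if "s \<in> {t0..t}" for s
    proof -
      have "((\<lambda>s. M - I s) has_real_derivative 0 - dI s) (at s within {0..})"
        using that assms by (intro DERIV_diff DERIV_const ode) auto
      then show ?thesis
        using assms by (auto elim!: DERIV_subset)
    qed
    show "\<bar>- dI s\<bar> \<le> beta * B * K" if "s \<in> {t0..t}" "\<forall>r\<in>{t0..s}. \<bar>M - I r\<bar> \<le> K" for s K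
    proof -
      have "\<bar>M - I s\<bar> * \<bar>Ia s\<bar> \<le> K * B"
        using that B[of s] assms by (intro mult_mono') auto
      then have "beta * (\<bar>M - I s\<bar> * \<bar>Ia s\<bar>) \<le> beta * (K * B)"
        using beta_pos by simp
      then show ?thesis
        unfolding abs_minus_cancel abs_dI by (simp add: ac_simps)
    qed
  qed (use assms in auto)
  then show ?thesis
    by simp
qed

lemma I_le_M:
  assumes "I 0 \<le> M" "0 \<le> t"
  shows "I t \<le> M"
proof (rule ccontr)
  assume "\<not> I t \<le> M"
  then obtain t0 where "0 \<le> t0" "t0 \<le> t" "I t0 = M"
    using IVT'[OF assms(1) _ assms(2) continuous_on_Icc_I[OF order.refl]] by force
  then show False
    using I_eq_M_after \<open>\<not> I t \<le> M\<close> by simp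
qed

lemma I_eq_0:
  assumes "I 0 = 0" "0 \<le> t"
  shows "I t = 0"
proof -
  have "continuous_on {0..t} (\<lambda>s. M - I s)"
    by (intro continuous_intros continuous_on_Icc_I order.refl)
  then obtain K where K: "\<And>s. s \<in> {0..t} \<Longrightarrow> \<bar>M - I s\<bar> \<le> K"
    using continuous_on_Icc_abs_bound by blast
  obtain C where C: "\<And>u. u \<in> {0..t} \<Longrightarrow> \<bar>g u\<bar> \<le> C"
    using continuous_on_Icc_abs_bound[OF continuous_on_Icc_kernel] by blast
  have "0 \<le> K" "0 \<le> C"
    using K[of 0] C[of 0] assms by auto
  show ?thesis
  proof (rule gronwall_vanishing[where f = I and f' = dI and L = "beta * K * (1 + C * t)"
        and a = 0 and b = t])
    show "0 \<le> beta * K * (1 + C * t)"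
      using beta_pos \<open>0 \<le> K\<close> \<open>0 \<le> C\<close> assms by simp
    show "(I has_real_derivative dI s) (at s within {0..t})" if "s \<in> {0..t}" for s
      using ode[of s] that by (auto elim!: DERIV_subset)
    show "\<bar>dI s\<bar> \<le> beta * K * (1 + C * t) * B" if "s \<in> {0..t}" "\<forall>r\<in>{0..s}. \<bar>I r\<bar> \<le> B" for s B
    proof -
      have "\<bar>Ia s\<bar> \<le> (1 + C * t) * B"
        using that C by (intro abs_active_infected_le) auto
      then have "\<bar>M - I s\<bar> * \<bar>Ia s\<bar> \<le> K * ((1 + C * t) * B)"
        using that K[of s] by (intro mult_mono') auto
      then have "beta * (\<bar>M - I s\<bar> * \<bar>Ia s\<bar>) \<le> beta * (K * ((1 + C * t) * B))"
        using beta_pos by simp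
      then show ?thesis
        unfolding abs_dI by (simp add: ac_simps)
    qed
  qed (use assms in auto)
qed

lemma active_infected_eq_0:
  assumes "I 0 = 0" "0 \<le> t"
  shows "Ia t = 0"
proof -
  have "integral {0..t} (\<lambda>s. g (t - s) * I s) = integral {0..t} (\<lambda>s. 0)"
    using I_eq_0 assms by (intro integral_cong) auto
  then show ?thesis
    using I_eq_0 assms unfolding active_infected_def by simp
qed

lemma mono_on_I:
  assumes "\<forall>s\<in>{0..<t}. 0 \<le> dI s"
  shows "mono_on {0..t} I"
proof (rule mono_onI)
  fix r s assume "r \<in> {0..t}" "s \<in> {0..t}" "r \<le> s"
  show "I r \<le> I s"
  proof (rule DERIV_nonneg_imp_increasing_open[OF \<open>r \<le> s\<close>])
    fix z assume "r < z" "z < s"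
    then have "at z within {0..} = at z"
      using \<open>r \<in> {0..t}\<close> by (intro at_within_interior) auto
    then show "\<exists>y. DERIV I z :> y \<and> 0 \<le> y"
      using ode[of z] assms \<open>r < z\<close> \<open>z < s\<close> \<open>r \<in> {0..t}\<close> \<open>s \<in> {0..t}\<close> by auto
  next
    show "continuous_on {r..s} I"
      using \<open>r \<in> {0..t}\<close> by (intro continuous_on_Icc_I) auto
  qed
qed

lemma continuous_on_dI:
  assumes "\<exists>I'. continuous_on {0..} I' \<and> (\<forall>t\<ge>0. (I has_real_derivative I' t) (at t within {0..}))"
  shows "continuous_on {0..} dI"
proof -
  obtain I' where cont: "continuous_on {0..} I'"
    and I': "\<And>t. 0 \<le> t \<Longrightarrow> (I has_real_derivative I' t) (at t within {0..})"
    using assms by blast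
  have "I' t = dI t" if "0 \<le> t" for t
  proof (rule has_field_derivative_unique)
    show "(I has_real_derivative I' t) (at t within {t..t+1})"
      using I'[OF that] that by (auto elim!: DERIV_subset)
    show "(I has_real_derivative dI t) (at t within {t..t+1})"
      using ode[OF that] that by (auto elim!: DERIV_subset)
  qed (simp add: at_within_Icc_at_right)
  with cont show ?thesis
    by (rule continuous_on_eq) simp
qed

lemma active_infected_pos:
  assumes mass: "\<And>t. 0 \<le> t \<Longrightarrow> integral {0..t} g < 1"
    and "continuous_on {0..} dI" "0 < I 0" "I 0 \<le> M" "0 \<le> t"
  shows "0 < Ia t"
proof -
  have pos: "0 < Ia s" if "0 \<le> s" "\<forall>u\<in>{0..<s}. 0 \<le> dI u" for s
  proof -
    have "integral {0..s} (\<lambda>u. g (s - u) * I u) < I s"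
      using that assms kernel_nonneg
      by (intro convolution_less_if_mono mono_on_I continuous_on_Icc_I continuous_on_Icc_kernel) auto
    then show ?thesis
      unfolding active_infected_def by simp
  qed
  have "0 \<le> dI s" if "0 \<le> s" for s
    using \<open>continuous_on {0..} dI\<close> _ that
  proof (rule nonneg_by_continuous_induction)
    fix s assume "0 \<le> s" "\<forall>u\<in>{0..<s}. 0 \<le> dI u"
    show "0 < dI s \<or> (\<forall>u\<ge>s. dI u = 0)"
    proof (cases "I s = M")
      case True
      then show ?thesis
        using I_eq_M_after \<open>0 \<le> s\<close> by auto
    next
      case False
      then have "I s < M"
        using I_le_M assms \<open>0 \<le> s\<close> by force
      then show ?thesis
        using pos \<open>0 \<le> s\<close> \<open>\<forall>u\<in>{0..<s}. 0 \<le> dI u\<close> beta_pos by simp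
    qed
  qed
  then show ?thesis
    using pos assms by auto
qed

end

theorem proposition3p6:
  fixes M beta mu sig I0 :: real and I :: "real \<Rightarrow> real"
  assumes "M > 0" and "beta > 0" and "sig > 0"
    and "0 \<le> I0" and "I0 \<le> M"
    and C1: "\<exists>I'. continuous_on {0..} I' \<and>
               (\<forall>t\<ge>0. (I has_real_derivative I' t) (at t within {0..}))"
    and ode: "\<forall>t\<ge>0. (I has_real_derivative
               (beta * (M - I t) * active_infected (lognormal_density mu sig) I t))
               (at t within {0..})"
    and init: "I 0 = I0"
  shows "(0 < I0 \<longrightarrow> (\<forall>t\<ge>0. active_infected (lognormal_density mu sig) I t > 0)) \<and>
         (I0 = 0 \<longrightarrow> (\<forall>t\<ge>0. active_infected (lognormal_density mu sig) I t = 0))"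
proof -
  interpret infection_ode "lognormal_density mu sig" I M beta
  proof
    show "continuous_on {0..} (lognormal_density mu sig)"
      using continuous_on_lognormal_density[OF \<open>sig > 0\<close>] by (rule continuous_on_subset) simp
  qed (use assms lognormal_density_nonneg in auto)
  have "continuous_on {0..} dI"
    using C1 by (rule continuous_on_dI)
  then show ?thesis
    using active_infected_pos[OF integral_lognormal_density_less_1[OF \<open>sig > 0\<close>]]
      active_infected_eq_0 init \<open>I0 \<le> M\<close> by auto
qed

end
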